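(* Let $d$ be a positive integer and $H$ a complex Hilbert space. Let $T=(T_1,\ldots,T_d)$ be a commuting operator-valued multishift on $\ell^2_H(\mathbb N^d)$ with unitary operator weights $\{A^{(j)}_\alpha:\alpha\in\mathbb N^d,\ j=1,\ldots,d\}$. Then $T$ satisfies the von Neumann's inequality, i.e. $\|p(T)\|\le\sup_{z\in\mathbb D^d}|p(z)|$ for every polynomial $p\in\mathbb C[z_1,\ldots,z_d]$.
   Context: $\mathbb N$ denotes the nonnegative integers; $\varepsilon_j\in\mathbb N^d$ has $1$ in the $j$-th place and $0$ elsewhere; $\mathbb D^d$ is the open unit polydisc. $\ell^2_H(\mathbb N^d)=\bigoplus_{\alpha\in\mathbb N^d}H$. Given bounded operators $A^{(j)}_\alpha:H\to H$, the operator-valued multishift with these operator weights is the $d$-tuple defined by $T_j(\oplus_\alpha x_\alpha)=\oplus_\alpha A^{(j)}_{\alpha-\varepsilon_j}x_{\alpha-\varepsilon_j}$ (the term being $0$ when $\alpha_j=0$). It is a commuting operator-valued multishift if $\sup_\alpha\|A^{(j)}_\alpha\|<\infty$ for each $j$ and $A^{(i)}_{\alpha+\varepsilon_j}A^{(j)}_\alpha=A^{(j)}_{\alpha+\varepsilon_i}A^{(i)}_\alpha$ for all $\alpha$ and all $i,j$. For $p(z)=\sum a_\alpha z^\alpha$, $p(T)=\sum a_\alpha T_1^{\alpha_1}\cdots T_d^{\alpha_d}$. *)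

theory Defs
  imports "HOL-Analysis.Analysis"
begin

text \<open>A complex Hilbert space: an abelian group 'h together with a complex scalar
multiplication sm and an inner product ip (linear in the first argument),
complete w.r.t. the induced norm.\<close>

definition hnorm :: "('h \<Rightarrow> 'h \<Rightarrow> complex) \<Rightarrow> 'h \<Rightarrow> real" where
  "hnorm ip x = sqrt (Re (ip x x))"

definition complex_hilbert_space ::
  "(complex \<Rightarrow> 'h::ab_group_add \<Rightarrow> 'h) \<Rightarrow> ('h \<Rightarrow> 'h \<Rightarrow> complex) \<Rightarrow> bool" where
  "complex_hilbert_space sm ip \<longleftrightarrow>
     (\<forall>x. sm 1 x = x) \<and>
     (\<forall>a b x. sm a (sm b x) = sm (a * b) x) \<and>
     (\<forall>a x y. sm a (x + y) = sm a x + sm a y) \<and>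
     (\<forall>a b x. sm (a + b) x = sm a x + sm b x) \<and>
     (\<forall>x y z. ip (x + y) z = ip x z + ip y z) \<and>
     (\<forall>a x y. ip (sm a x) y = a * ip x y) \<and>
     (\<forall>x y. ip y x = cnj (ip x y)) \<and>
     (\<forall>x. 0 \<le> Re (ip x x)) \<and>
     (\<forall>x. ip x x = 0 \<longrightarrow> x = 0) \<and>
     (\<forall>X :: nat \<Rightarrow> 'h.
        (\<forall>e>0. \<exists>N. \<forall>m\<ge>N. \<forall>n\<ge>N. hnorm ip (X m - X n) < e) \<longrightarrow>
        (\<exists>L. (\<lambda>n. hnorm ip (X n - L)) \<longlonglongrightarrow> 0))"

definition clinear_op :: "(complex \<Rightarrow> 'h::ab_group_add \<Rightarrow> 'h) \<Rightarrow> ('h \<Rightarrow> 'h) \<Rightarrow> bool" where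
  "clinear_op sm L \<longleftrightarrow> (\<forall>x y. L (x + y) = L x + L y) \<and> (\<forall>a x. L (sm a x) = sm a (L x))"

definition unitary_op ::
  "(complex \<Rightarrow> 'h::ab_group_add \<Rightarrow> 'h) \<Rightarrow> ('h \<Rightarrow> 'h \<Rightarrow> complex) \<Rightarrow> ('h \<Rightarrow> 'h) \<Rightarrow> bool" where
  "unitary_op sm ip U \<longleftrightarrow> clinear_op sm U \<and> surj U \<and> (\<forall>x y. ip (U x) (U y) = ip x y)"

text \<open>Multi-indices in N^d, represented as functions nat \<Rightarrow> nat vanishing from d on;
 coordinates are indexed 0..d-1.\<close>

definition multi_idx :: "nat \<Rightarrow> (nat \<Rightarrow> nat) set" where
  "multi_idx d = {\<alpha>. \<forall>j\<ge>d. \<alpha> j = 0}"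

definition l2H :: "nat \<Rightarrow> ('h::ab_group_add \<Rightarrow> 'h \<Rightarrow> complex) \<Rightarrow> ((nat \<Rightarrow> nat) \<Rightarrow> 'h) set" where
  "l2H d ip = {x. (\<forall>\<alpha>. \<alpha> \<notin> multi_idx d \<longrightarrow> x \<alpha> = 0) \<and>
                  (\<lambda>\<alpha>. (hnorm ip (x \<alpha>))\<^sup>2) summable_on multi_idx d}"

definition l2norm :: "nat \<Rightarrow> ('h \<Rightarrow> 'h \<Rightarrow> complex) \<Rightarrow> ((nat \<Rightarrow> nat) \<Rightarrow> 'h) \<Rightarrow> real" where
  "l2norm d ip x = sqrt (\<Sum>\<^sub>\<infinity>\<alpha>\<in>multi_idx d. (hnorm ip (x \<alpha>))\<^sup>2)"

definition multishift ::
  "nat \<Rightarrow> (nat \<Rightarrow> (nat \<Rightarrow> nat) \<Rightarrow> 'h \<Rightarrow> 'h) \<Rightarrow> nat \<Rightarrow> ((nat \<Rightarrow> nat) \<Rightarrow> 'h::zero) \<Rightarrow> ((nat \<Rightarrow> nat) \<Rightarrow> 'h)" where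
  "multishift d A j x = (\<lambda>\<alpha>. if \<alpha> \<in> multi_idx d \<and> j < d \<and> 0 < \<alpha> j
       then A j (\<alpha>(j := \<alpha> j - 1)) (x (\<alpha>(j := \<alpha> j - 1))) else 0)"

definition commuting_weights ::
  "nat \<Rightarrow> ('h::ab_group_add \<Rightarrow> 'h \<Rightarrow> complex) \<Rightarrow> (nat \<Rightarrow> (nat \<Rightarrow> nat) \<Rightarrow> 'h \<Rightarrow> 'h) \<Rightarrow> bool" where
  "commuting_weights d ip A \<longleftrightarrow>
     (\<forall>j<d. \<exists>M. \<forall>\<alpha>\<in>multi_idx d. \<forall>x. hnorm ip (A j \<alpha> x) \<le> M * hnorm ip x) \<and>
     (\<forall>\<alpha>\<in>multi_idx d. \<forall>i<d. \<forall>j<d.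
        A i (\<alpha>(j := \<alpha> j + 1)) \<circ> A j \<alpha> = A j (\<alpha>(i := \<alpha> i + 1)) \<circ> A i \<alpha>)"

text \<open>Polynomials in d variables: finitely supported coefficient functions on multi-indices.\<close>

definition is_poly :: "nat \<Rightarrow> ((nat \<Rightarrow> nat) \<Rightarrow> complex) \<Rightarrow> bool" where
  "is_poly d c \<longleftrightarrow> finite {\<alpha>. c \<alpha> \<noteq> 0} \<and> {\<alpha>. c \<alpha> \<noteq> 0} \<subseteq> multi_idx d"

definition poly_eval :: "nat \<Rightarrow> ((nat \<Rightarrow> nat) \<Rightarrow> complex) \<Rightarrow> (nat \<Rightarrow> complex) \<Rightarrow> complex" where
  "poly_eval d c z = (\<Sum>\<alpha>\<in>{\<alpha>. c \<alpha> \<noteq> 0}. c \<alpha> * (\<Prod>j<d. z j ^ \<alpha> j))"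

definition polydisc :: "nat \<Rightarrow> (nat \<Rightarrow> complex) set" where
  "polydisc d = {z. (\<forall>j<d. cmod (z j) < 1) \<and> (\<forall>j\<ge>d. z j = 0)}"

primrec mono_op :: "(nat \<Rightarrow> 'a \<Rightarrow> 'a) \<Rightarrow> (nat \<Rightarrow> nat) \<Rightarrow> nat \<Rightarrow> 'a \<Rightarrow> 'a" where
  "mono_op T \<alpha> 0 = id"
| "mono_op T \<alpha> (Suc k) = mono_op T \<alpha> k \<circ> (T k ^^ \<alpha> k)"

definition poly_op ::
  "nat \<Rightarrow> (complex \<Rightarrow> 'h::ab_group_add \<Rightarrow> 'h) \<Rightarrow> ((nat \<Rightarrow> nat) \<Rightarrow> complex) \<Rightarrow>
   (nat \<Rightarrow> ((nat \<Rightarrow> nat) \<Rightarrow> 'h) \<Rightarrow> ((nat \<Rightarrow> nat) \<Rightarrow> 'h)) \<Rightarrow>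
   ((nat \<Rightarrow> nat) \<Rightarrow> 'h) \<Rightarrow> ((nat \<Rightarrow> nat) \<Rightarrow> 'h)" where
  "poly_op d sm c T x = (\<lambda>\<beta>. \<Sum>\<alpha>\<in>{\<alpha>. c \<alpha> \<noteq> 0}. sm (c \<alpha>) (mono_op T \<alpha> d x \<beta>))"

end

theory Submission
  imports Defs "HOL-Library.Function_Algebras"
begin

text \<open>The commutation relations make the composite \<open>U \<beta>\<close> of the weights along a lattice path
  from \<open>0\<close> to \<open>\<beta>\<close> independent of the path; it is unitary and satisfies
  \<open>A j \<beta> \<circ> U \<beta> = U (\<beta> + \<epsilon> j)\<close>. So the diagonal unitary \<open>W = diag (U \<beta>)\<close> intertwines
  \<open>T j\<close> with the shift \<open>S j\<close> with identity weights, and it suffices to bound \<open>p(S)\<close>, which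
  is convolution with the coefficients of \<open>p\<close>. For data supported in a box of side \<open>K\<close>, the
  discrete Fourier transform on \<open>{0..L-1}^d\<close> with \<open>L \<ge> 2 K\<close> turns this convolution, without
  wrap-around, into multiplication by \<open>p\<close> at the points of the torus whose coordinates are
  \<open>L\<close>-th roots of unity. Parseval's identity then bounds it by \<open>sup |p|\<close> on the torus,
  which radial limits bound by the supremum over the open polydisc, and truncation extends the
  estimate from finitely supported data to all of \<open>l2H\<close>.\<close>

locale complex_semi_inner =
  fixes sm :: "complex \<Rightarrow> 'h::ab_group_add \<Rightarrow> 'h" and ip :: "'h \<Rightarrow> 'h \<Rightarrow> complex"
  assumes sm_assoc: "sm a (sm b x) = sm (a * b) x"
    and sm_add_right: "sm a (x + y) = sm a x + sm a y"
    and sm_add_left: "sm (a + b) x = sm a x + sm b x"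
    and ip_add_left: "ip (x + y) z = ip x z + ip y z"
    and ip_sm_left: "ip (sm a x) y = a * ip x y"
    and ip_conj: "ip y x = cnj (ip x y)"
    and ip_self_nonneg: "0 \<le> Re (ip x x)"
begin

lemma sm_zero_right [simp]: "sm a 0 = 0"
  using sm_add_right[of a 0 0] by simp

lemma sm_zero_left [simp]: "sm 0 x = 0"
  using sm_add_left[of 0 0 x] by simp

lemma sm_sum_right: "sm a (sum f S) = (\<Sum>i\<in>S. sm a (f i))"
  by (induction S rule: infinite_finite_induct) (auto simp: sm_add_right)

lemma sm_sum_left: "sm (sum f S) x = (\<Sum>i\<in>S. sm (f i) x)"
  by (induction S rule: infinite_finite_induct) (auto simp: sm_add_left)

lemma ip_zero_left [simp]: "ip 0 y = 0"
  using ip_add_left[of 0 0 y] by simp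

lemma hnorm_zero [simp]: "hnorm ip 0 = 0"
  by (simp add: hnorm_def)

lemma ip_sum_left: "ip (sum f S) y = (\<Sum>i\<in>S. ip (f i) y)"
  by (induction S rule: infinite_finite_induct) (auto simp: ip_add_left)

lemma ip_sum_right: "ip y (sum f S) = (\<Sum>i\<in>S. ip y (f i))"
  by (subst ip_conj) (simp add: ip_sum_left ip_conj[of y])

lemma ip_sm_right: "ip x (sm a y) = cnj a * ip x y"
  by (subst ip_conj) (simp add: ip_sm_left ip_conj[of x])

lemma hnorm_power2: "(hnorm ip x)\<^sup>2 = Re (ip x x)"
  unfolding hnorm_def using ip_self_nonneg by simp

lemma hnorm_sm: "hnorm ip (sm a x) = cmod a * hnorm ip x"
proof -
  have "ip (sm a x) (sm a x) = (a * cnj a) * ip x x"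
    by (simp add: ip_sm_left ip_sm_right mult_ac)
  also have "a * cnj a = of_real ((cmod a)\<^sup>2)"
    by (rule complex_norm_square[symmetric])
  finally show ?thesis
    unfolding hnorm_def by (simp add: real_sqrt_mult)
qed

end

lemma complex_hilbert_space_semi_inner:
  "complex_hilbert_space sm ip \<Longrightarrow> complex_semi_inner sm ip"
  unfolding complex_hilbert_space_def complex_semi_inner_def by (elim conjE) (intro conjI; blast)

lemma
  assumes "unitary_op sm ip U"
  shows unitary_op_add: "U (x + y) = U x + U y"
    and unitary_op_sm: "U (sm a x) = sm a (U x)"
    and unitary_op_surj: "surj U"
    and hnorm_unitary_op: "hnorm ip (U x) = hnorm ip x"
  using assms unfolding unitary_op_def clinear_op_def hnorm_def by auto

lemma unitary_op_zero: "unitary_op sm ip U \<Longrightarrow> U 0 = 0"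
  using unitary_op_add[of sm ip U 0 0] by simp

lemma unitary_op_sum: "unitary_op sm ip U \<Longrightarrow> U (sum f S) = (\<Sum>i\<in>S. U (f i))"
  by (induction S rule: infinite_finite_induct) (auto simp: unitary_op_zero unitary_op_add)

lemma unitary_op_id: "unitary_op sm ip id"
  unfolding unitary_op_def clinear_op_def by simp

lemma unitary_op_comp:
  "unitary_op sm ip U \<Longrightarrow> unitary_op sm ip V \<Longrightarrow> unitary_op sm ip (U \<circ> V)"
  unfolding unitary_op_def clinear_op_def using comp_surj[of V U] by auto

section \<open>Weights along lattice paths\<close>

definition low_coord :: "nat \<Rightarrow> (nat \<Rightarrow> nat) \<Rightarrow> nat" where
  "low_coord d \<beta> = (LEAST j. j < d \<and> 0 < \<beta> j)"

definition dec_at :: "nat \<Rightarrow> (nat \<Rightarrow> nat) \<Rightarrow> (nat \<Rightarrow> nat)" where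
  "dec_at j \<beta> = \<beta>(j := \<beta> j - 1)"

lemma low_coord_spec:
  assumes "\<exists>j<d. 0 < \<beta> j"
  shows "low_coord d \<beta> < d" "0 < \<beta> (low_coord d \<beta>)" "\<And>i. i < low_coord d \<beta> \<Longrightarrow> \<beta> i = 0"
proof -
  show "low_coord d \<beta> < d" "0 < \<beta> (low_coord d \<beta>)"
    using LeastI_ex[OF assms] unfolding low_coord_def by auto
  fix i
  assume "i < low_coord d \<beta>"
  with \<open>low_coord d \<beta> < d\<close> show "\<beta> i = 0"
    using not_less_Least[of i "\<lambda>j. j < d \<and> 0 < \<beta> j"] unfolding low_coord_def by auto
qed

lemma low_coord_incr:
  assumes "j < d"
  shows "low_coord d (\<beta>(j := \<beta> j + 1)) =
           (if (\<exists>i<d. 0 < \<beta> i) \<and> low_coord d \<beta> < j then low_coord d \<beta> else j)"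
proof (cases "(\<exists>i<d. 0 < \<beta> i) \<and> low_coord d \<beta> < j")
  case True
  then have m: "low_coord d \<beta> < d" "0 < \<beta> (low_coord d \<beta>)"
    "\<And>i. i < low_coord d \<beta> \<Longrightarrow> \<beta> i = 0" "low_coord d \<beta> < j"
    using low_coord_spec[of d \<beta>] by auto
  have "low_coord d (\<beta>(j := \<beta> j + 1)) = low_coord d \<beta>"
    unfolding low_coord_def[of d "\<beta>(j := \<beta> j + 1)"]
  proof (rule Least_equality)
    show "low_coord d \<beta> < d \<and> 0 < (\<beta>(j := \<beta> j + 1)) (low_coord d \<beta>)"
      using m by simp
    show "low_coord d \<beta> \<le> i" if i: "i < d \<and> 0 < (\<beta>(j := \<beta> j + 1)) i" for i
    proof (rule ccontr)
      assume "\<not> low_coord d \<beta> \<le> i"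
      then have "i \<noteq> j" "\<beta> i = 0"
        using m(3,4) by auto
      with i show False
        by simp
    qed
  qed
  with True show ?thesis
    by simp
next
  case False
  have "low_coord d (\<beta>(j := \<beta> j + 1)) = j"
    unfolding low_coord_def[of d "\<beta>(j := \<beta> j + 1)"]
  proof (rule Least_equality)
    show "j < d \<and> 0 < (\<beta>(j := \<beta> j + 1)) j"
      using assms by simp
    show "j \<le> i" if i: "i < d \<and> 0 < (\<beta>(j := \<beta> j + 1)) i" for i
    proof (rule ccontr)
      assume "\<not> j \<le> i"
      then have "i < d" "0 < \<beta> i" "i < j"
        using i by auto
      moreover from this have "low_coord d \<beta> \<le> i"
        unfolding low_coord_def by (blast intro: Least_le)
      ultimately show False
        using False by auto
    qed
  qed
  with False show ?thesis
    by simp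
qed

lemma sum_dec_at_less:
  assumes "\<exists>j<d. 0 < \<beta> j"
  shows "(\<Sum>j<d. dec_at (low_coord d \<beta>) \<beta> j) < (\<Sum>j<d. \<beta> j)"
  using low_coord_spec[OF assms]
  by (intro sum_strict_mono_ex1) (auto simp: dec_at_def intro!: bexI[of _ "low_coord d \<beta>"])

function path_weight :: "nat \<Rightarrow> (nat \<Rightarrow> (nat \<Rightarrow> nat) \<Rightarrow> 'h \<Rightarrow> 'h) \<Rightarrow> (nat \<Rightarrow> nat) \<Rightarrow> 'h \<Rightarrow> 'h" where
  "path_weight d A \<beta> =
     (if \<exists>j<d. 0 < \<beta> j
      then A (low_coord d \<beta>) (dec_at (low_coord d \<beta>) \<beta>) \<circ> path_weight d A (dec_at (low_coord d \<beta>) \<beta>)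
      else id)"
  by auto
termination
  by (relation "Wellfounded.measure (\<lambda>(d, A, \<beta>). \<Sum>j<d. \<beta> j)") (auto intro: sum_dec_at_less)

declare path_weight.simps [simp del]

lemma path_weight_step:
  "\<exists>j<d. 0 < \<beta> j \<Longrightarrow> path_weight d A \<beta> =
     A (low_coord d \<beta>) (dec_at (low_coord d \<beta>) \<beta>) \<circ> path_weight d A (dec_at (low_coord d \<beta>) \<beta>)"
  by (subst path_weight.simps) (rule if_P)

lemma path_weight_zero: "\<not> (\<exists>j<d. 0 < \<beta> j) \<Longrightarrow> path_weight d A \<beta> = id"
  by (subst path_weight.simps) (rule if_not_P)

lemma multi_idx_upd: "j < d \<Longrightarrow> \<beta>(j := n) \<in> multi_idx d \<longleftrightarrow> \<beta> \<in> multi_idx d"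
  unfolding multi_idx_def by auto

lemma path_weight_unitary:
  assumes "\<And>j \<alpha>. j < d \<Longrightarrow> \<alpha> \<in> multi_idx d \<Longrightarrow> unitary_op sm ip (A j \<alpha>)"
  shows "\<beta> \<in> multi_idx d \<Longrightarrow> unitary_op sm ip (path_weight d A \<beta>)"
proof (induction "\<Sum>j<d. \<beta> j" arbitrary: \<beta> rule: less_induct)
  case less
  show ?case
  proof (cases "\<exists>j<d. 0 < \<beta> j")
    case True
    let ?m = "low_coord d \<beta>"
    have "?m < d" "dec_at ?m \<beta> \<in> multi_idx d"
      using low_coord_spec[OF True] less.prems by (auto simp: dec_at_def multi_idx_upd)
    then show ?thesis
      unfolding path_weight_step[OF True]
      using less.hyps[OF sum_dec_at_less[OF True]] assms by (intro unitary_op_comp) auto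
  qed (simp add: path_weight_zero unitary_op_id)
qed

text \<open>\<open>path_weight\<close> takes its last step in the lowest nonzero coordinate \<open>m\<close>. If \<open>j \<le> m\<close>, the
  path to \<open>\<beta> + \<epsilon> j\<close> ends with a step in direction \<open>j\<close>; otherwise it ends in direction \<open>m\<close>, and
  the commutation relation at \<open>\<beta> - \<epsilon> m\<close> exchanges the last two steps.\<close>

lemma path_weight_incr:
  assumes comm: "\<And>\<alpha> i j. \<alpha> \<in> multi_idx d \<Longrightarrow> i < d \<Longrightarrow> j < d \<Longrightarrow>
      A i (\<alpha>(j := \<alpha> j + 1)) \<circ> A j \<alpha> = A j (\<alpha>(i := \<alpha> i + 1)) \<circ> A i \<alpha>"
  shows "\<beta> \<in> multi_idx d \<Longrightarrow> j < d \<Longrightarrow>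
    path_weight d A (\<beta>(j := \<beta> j + 1)) = A j \<beta> \<circ> path_weight d A \<beta>"
proof (induction "\<Sum>j<d. \<beta> j" arbitrary: \<beta> rule: less_induct)
  case less
  let ?b = "\<beta>(j := \<beta> j + 1)"
  have b: "\<exists>i<d. 0 < ?b i"
    using less.prems by auto
  show ?case
  proof (cases "(\<exists>i<d. 0 < \<beta> i) \<and> low_coord d \<beta> < j")
    case False
    then have "low_coord d ?b = j"
      using low_coord_incr[OF less.prems(2), of \<beta>] by simp
    moreover have "dec_at j ?b = \<beta>"
      by (simp add: dec_at_def)
    ultimately show ?thesis
      unfolding path_weight_step[OF b] by simp
  next
    case True
    then have \<beta>: "\<exists>i<d. 0 < \<beta> i"
      by blast
    define m \<gamma> where "m = low_coord d \<beta>" and "\<gamma> = dec_at m \<beta>"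
    have m: "m < d" "0 < \<beta> m" "m < j"
      using low_coord_spec[OF \<beta>] True by (auto simp: m_def)
    have low_b: "low_coord d ?b = m"
      using low_coord_incr[OF less.prems(2), of \<beta>] True by (simp add: m_def)
    have \<gamma>: "\<gamma> \<in> multi_idx d"
      using less.prems m by (simp add: \<gamma>_def dec_at_def multi_idx_upd)
    have b_dec: "dec_at m ?b = \<gamma>(j := \<gamma> j + 1)" and \<gamma>_incr: "\<gamma>(m := \<gamma> m + 1) = \<beta>"
      using m by (auto simp: \<gamma>_def dec_at_def)
    have "(\<Sum>i<d. \<gamma> i) < (\<Sum>i<d. \<beta> i)"
      unfolding \<gamma>_def m_def by (rule sum_dec_at_less[OF \<beta>])
    then have IH: "path_weight d A (\<gamma>(j := \<gamma> j + 1)) = A j \<gamma> \<circ> path_weight d A \<gamma>"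
      using \<gamma> less.prems(2) by (rule less.hyps)
    have "path_weight d A ?b = A m (\<gamma>(j := \<gamma> j + 1)) \<circ> path_weight d A (\<gamma>(j := \<gamma> j + 1))"
      unfolding path_weight_step[OF b] low_b b_dec ..
    also have "\<dots> = (A m (\<gamma>(j := \<gamma> j + 1)) \<circ> A j \<gamma>) \<circ> path_weight d A \<gamma>"
      unfolding IH comp_assoc ..
    also have "\<dots> = (A j (\<gamma>(m := \<gamma> m + 1)) \<circ> A m \<gamma>) \<circ> path_weight d A \<gamma>"
      unfolding comm[OF \<gamma> m(1) less.prems(2)] ..
    also have "\<dots> = A j \<beta> \<circ> (A m \<gamma> \<circ> path_weight d A \<gamma>)"
      unfolding \<gamma>_incr comp_assoc ..
    also have "A m \<gamma> \<circ> path_weight d A \<gamma> = path_weight d A \<beta>"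
      unfolding path_weight_step[OF \<beta>] m_def[symmetric] \<gamma>_def[symmetric] ..
    finally show ?thesis .
  qed
qed

section \<open>Reduction to the unweighted shift\<close>

definition weight_diag ::
  "nat \<Rightarrow> (nat \<Rightarrow> (nat \<Rightarrow> nat) \<Rightarrow> 'h \<Rightarrow> 'h) \<Rightarrow> ((nat \<Rightarrow> nat) \<Rightarrow> 'h) \<Rightarrow> ((nat \<Rightarrow> nat) \<Rightarrow> 'h)" where
  "weight_diag d A y = (\<lambda>\<beta>. if \<beta> \<in> multi_idx d then path_weight d A \<beta> (y \<beta>) else y \<beta>)"

abbreviation unweighted_shift :: "nat \<Rightarrow> nat \<Rightarrow> ((nat \<Rightarrow> nat) \<Rightarrow> 'h::zero) \<Rightarrow> ((nat \<Rightarrow> nat) \<Rightarrow> 'h)" where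
  "unweighted_shift d \<equiv> multishift d (\<lambda>_ _ x. x)"

locale unitary_multishift =
  fixes d :: nat and sm :: "complex \<Rightarrow> 'h::ab_group_add \<Rightarrow> 'h" and ip :: "'h \<Rightarrow> 'h \<Rightarrow> complex"
    and A :: "nat \<Rightarrow> (nat \<Rightarrow> nat) \<Rightarrow> 'h \<Rightarrow> 'h"
  assumes weight_unitary: "\<And>j \<alpha>. j < d \<Longrightarrow> \<alpha> \<in> multi_idx d \<Longrightarrow> unitary_op sm ip (A j \<alpha>)"
    and weight_comm: "\<And>\<alpha> i j. \<alpha> \<in> multi_idx d \<Longrightarrow> i < d \<Longrightarrow> j < d \<Longrightarrow>
      A i (\<alpha>(j := \<alpha> j + 1)) \<circ> A j \<alpha> = A j (\<alpha>(i := \<alpha> i + 1)) \<circ> A i \<alpha>"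
begin

lemmas unitary_path_weight = path_weight_unitary[OF weight_unitary]

lemma multishift_weight_diag:
  "multishift d A j (weight_diag d A y) = weight_diag d A (unweighted_shift d j y)"
proof
  fix \<beta>
  show "multishift d A j (weight_diag d A y) \<beta> = weight_diag d A (unweighted_shift d j y) \<beta>"
  proof (cases "\<beta> \<in> multi_idx d \<and> j < d \<and> 0 < \<beta> j")
    case True
    define \<alpha> where "\<alpha> = \<beta>(j := \<beta> j - 1)"
    have \<alpha>: "\<alpha> \<in> multi_idx d" "\<alpha>(j := \<alpha> j + 1) = \<beta>"
      using True by (auto simp: \<alpha>_def multi_idx_upd)
    then have "A j \<alpha> (path_weight d A \<alpha> (y \<alpha>)) = path_weight d A \<beta> (y \<alpha>)"
      using path_weight_incr[OF weight_comm \<alpha>(1), of j] True by simp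
    then show ?thesis
      using True \<alpha> unfolding multishift_def weight_diag_def \<alpha>_def[symmetric] by simp
  qed (auto simp: multishift_def weight_diag_def unitary_op_zero[OF unitary_path_weight])
qed

lemma poly_op_weight_diag:
  "poly_op d sm c (multishift d A) (weight_diag d A y) =
    weight_diag d A (poly_op d sm c (unweighted_shift d) y)"
proof -
  have "(multishift d A j ^^ n) (weight_diag d A y) = weight_diag d A ((unweighted_shift d j ^^ n) y)" for j n y
    by (induction n) (simp_all add: multishift_weight_diag)
  then have mono: "mono_op (multishift d A) \<alpha> k (weight_diag d A y) =
      weight_diag d A (mono_op (unweighted_shift d) \<alpha> k y)" for \<alpha> k y
    by (induction k arbitrary: y) simp_all
  show ?thesis
    unfolding poly_op_def mono
    by (auto simp: fun_eq_iff weight_diag_def unitary_op_sum[OF unitary_path_weight]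
        unitary_op_sm[OF unitary_path_weight])
qed

lemma hnorm_weight_diag: "hnorm ip (weight_diag d A y \<beta>) = hnorm ip (y \<beta>)"
  by (simp add: weight_diag_def hnorm_unitary_op[OF unitary_path_weight])

lemma l2norm_weight_diag: "l2norm d ip (weight_diag d A y) = l2norm d ip y"
  unfolding l2norm_def hnorm_weight_diag ..

lemma weight_diag_surj:
  assumes "x \<in> l2H d ip"
  obtains y where "y \<in> l2H d ip" "weight_diag d A y = x"
proof
  define y where "y = (\<lambda>\<beta>. if \<beta> \<in> multi_idx d then inv (path_weight d A \<beta>) (x \<beta>) else x \<beta>)"
  show x_eq: "weight_diag d A y = x"
    using unitary_op_surj[OF unitary_path_weight]
    by (auto simp: fun_eq_iff weight_diag_def y_def surj_f_inv_f)
  have "hnorm ip (y \<beta>) = hnorm ip (x \<beta>)" for \<beta>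
    using hnorm_weight_diag[of y \<beta>] by (simp add: x_eq)
  then show "y \<in> l2H d ip"
    using assms by (simp add: l2H_def y_def)
qed

lemma l2norm_poly_op_unweighted_shift:
  assumes "x \<in> l2H d ip"
  obtains y where "y \<in> l2H d ip" "l2norm d ip y = l2norm d ip x"
    "l2norm d ip (poly_op d sm c (multishift d A) x) = l2norm d ip (poly_op d sm c (unweighted_shift d) y)"
proof -
  obtain y where "y \<in> l2H d ip" "weight_diag d A y = x"
    using weight_diag_surj[OF assms] .
  then show ?thesis
    using that[of y] by (metis l2norm_weight_diag poly_op_weight_diag)
qed

end

section \<open>The unweighted shift as a convolution\<close>

definition multi_supported :: "nat \<Rightarrow> ((nat \<Rightarrow> nat) \<Rightarrow> 'h::zero) set" where
  "multi_supported d = {y. \<forall>\<beta>. \<beta> \<notin> multi_idx d \<longrightarrow> y \<beta> = 0}"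

lemma unweighted_shift_multi_supported: "unweighted_shift d j y \<in> multi_supported d"
  unfolding multi_supported_def multishift_def by auto

lemma unweighted_shift_pow:
  assumes "j < d" "y \<in> multi_supported d"
  shows "(unweighted_shift d j ^^ n) y \<beta> = (if n \<le> \<beta> j then y (\<beta>(j := \<beta> j - n)) else 0)"
proof (induction n arbitrary: \<beta>)
  case (Suc n)
  show ?case
  proof (cases "\<beta> \<in> multi_idx d")
    case True
    then show ?thesis
      using Suc assms(1) by (auto simp: multishift_def multi_idx_upd) (auto simp: fun_upd_def)
  next
    case False
    then have "\<beta>(j := \<beta> j - Suc n) \<notin> multi_idx d"
      using assms(1) by (simp add: multi_idx_upd)
    then show ?thesis
      using False assms(2) by (auto simp: multishift_def multi_supported_def)
  qed
qed simp

lemma mono_op_unweighted_shift_partial: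
  assumes "y \<in> multi_supported d" "k \<le> d"
  shows "mono_op (unweighted_shift d) \<alpha> k y \<beta> =
    (if \<forall>j<k. \<alpha> j \<le> \<beta> j then y (\<lambda>i. if i < k then \<beta> i - \<alpha> i else \<beta> i) else 0)"
  using assms
proof (induction k arbitrary: y \<beta>)
  case (Suc k)
  let ?y = "(unweighted_shift d k ^^ \<alpha> k) y"
  have y: "?y \<in> multi_supported d"
    using Suc.prems by (cases "\<alpha> k") (simp_all add: unweighted_shift_multi_supported)
  have upd: "(\<lambda>i. if i < k then \<beta> i - \<alpha> i else \<beta> i)(k := \<beta> k - \<alpha> k) =
      (\<lambda>i. if i < Suc k then \<beta> i - \<alpha> i else \<beta> i)"
    by (auto simp: less_Suc_eq)
  have "mono_op (unweighted_shift d) \<alpha> (Suc k) y \<beta> = mono_op (unweighted_shift d) \<alpha> k ?y \<beta>"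
    by simp
  also have "\<dots> = (if \<forall>j<k. \<alpha> j \<le> \<beta> j then ?y (\<lambda>i. if i < k then \<beta> i - \<alpha> i else \<beta> i) else 0)"
    using Suc.IH[OF y] Suc.prems by simp
  also have "\<dots> = (if \<forall>j<Suc k. \<alpha> j \<le> \<beta> j
      then y (\<lambda>i. if i < Suc k then \<beta> i - \<alpha> i else \<beta> i) else 0)"
    using unweighted_shift_pow[of k d y "\<alpha> k"] Suc.prems upd by (auto simp: less_Suc_eq)
  finally show ?case .
qed simp

lemma mono_op_unweighted_shift:
  assumes "y \<in> multi_supported d" "\<alpha> \<in> multi_idx d"
  shows "mono_op (unweighted_shift d) \<alpha> d y \<beta> = (if \<alpha> \<le> \<beta> then y (\<beta> - \<alpha>) else 0)"
proof -
  have \<alpha>: "\<And>i. d \<le> i \<Longrightarrow> \<alpha> i = 0"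
    using assms(2) by (simp add: multi_idx_def)
  then have "(\<forall>j<d. \<alpha> j \<le> \<beta> j) \<longleftrightarrow> \<alpha> \<le> \<beta>"
    unfolding le_fun_def by (metis not_le zero_le)
  moreover have "(\<lambda>i. if i < d then \<beta> i - \<alpha> i else \<beta> i) = \<beta> - \<alpha>"
    using \<alpha> by (auto simp: fun_eq_iff)
  ultimately show ?thesis
    using mono_op_unweighted_shift_partial[OF assms(1) order_refl] by simp
qed

context complex_semi_inner
begin

definition poly_conv :: "((nat \<Rightarrow> nat) \<Rightarrow> complex) \<Rightarrow> ((nat \<Rightarrow> nat) \<Rightarrow> 'h) \<Rightarrow> (nat \<Rightarrow> nat) \<Rightarrow> 'h" where
  "poly_conv c y \<beta> = (\<Sum>\<alpha>\<in>{\<alpha>. c \<alpha> \<noteq> 0}. if \<alpha> \<le> \<beta> then sm (c \<alpha>) (y (\<beta> - \<alpha>)) else 0)"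

lemma poly_op_unweighted_shift:
  assumes "y \<in> multi_supported d" "is_poly d c"
  shows "poly_op d sm c (unweighted_shift d) y = poly_conv c y"
  using assms by (auto simp: fun_eq_iff poly_op_def poly_conv_def is_poly_def mono_op_unweighted_shift
      intro!: sum.cong)

end

section \<open>Discrete Fourier analysis on a grid\<close>

definition root_unity :: "nat \<Rightarrow> complex" where
  "root_unity L = cis (2 * pi / L)"

lemma root_unity_power: "root_unity L ^ n = cis (2 * pi * real n / real L)"
  by (simp add: root_unity_def Complex.DeMoivre mult_ac)

lemma norm_root_unity [simp]: "cmod (root_unity L) = 1"
  by (simp add: root_unity_def)

lemma root_unity_power_eq_iff:
  assumes "a < L" "b < L"
  shows "root_unity L ^ a = root_unity L ^ b \<longleftrightarrow> a = b"
  using bij_betw_imp_inj_on[OF Complex.bij_betw_roots_unity[of L]] assms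
  unfolding root_unity_power inj_on_def by auto

lemma root_unity_power_self: "0 < L \<Longrightarrow> root_unity L ^ L = 1"
  unfolding root_unity_power by simp

lemma sum_root_unity_powers:
  assumes "a < L" "b < L"
  shows "(\<Sum>t<L. (root_unity L ^ a * cnj (root_unity L ^ b)) ^ t) = (if a = b then of_nat L else 0)"
proof -
  have unit: "root_unity L ^ n * cnj (root_unity L ^ n) = 1" for n
    using complex_norm_square[of "root_unity L ^ n"] by (simp add: norm_power)
  define w where "w = root_unity L ^ a * cnj (root_unity L ^ b)"
  show ?thesis
  proof (cases "a = b")
    case True
    then show ?thesis
      unfolding True unit by simp
  next
    case False
    have "w * root_unity L ^ b = root_unity L ^ a * (root_unity L ^ b * cnj (root_unity L ^ b))"
      by (simp only: w_def mult_ac)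
    then have "w * root_unity L ^ b = root_unity L ^ a"
      by (simp only: unit mult_1_right)
    then have "w \<noteq> 1"
      using False assms by (auto simp: root_unity_power_eq_iff)
    moreover have "w ^ L = (root_unity L ^ L) ^ a * cnj ((root_unity L ^ L) ^ b)"
      by (simp add: w_def power_mult_distrib mult.commute flip: power_mult)
    then have "w ^ L = 1"
      using assms by (simp add: root_unity_power_self)
    ultimately show ?thesis
      using geometric_sum[of w L] False by (simp add: w_def)
  qed
qed

definition grid :: "nat \<Rightarrow> nat \<Rightarrow> (nat \<Rightarrow> nat) set" where
  "grid d L = {\<gamma>. (\<forall>j<d. \<gamma> j < L) \<and> (\<forall>j\<ge>d. \<gamma> j = 0)}"

lemma finite_grid: "finite (grid d L)"
  by (rule finite_subset[OF _ finite_set_of_finite_funs[of "{..<d}" "{..<L}" 0]])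
    (auto simp: grid_def)

lemma grid_subset_multi_idx: "grid d L \<subseteq> multi_idx d"
  by (auto simp: grid_def multi_idx_def)

lemma grid_mono: "K \<le> L \<Longrightarrow> grid d K \<subseteq> grid d L"
  by (auto simp: grid_def less_le_trans)

lemma finite_subset_grid:
  assumes "finite S" "S \<subseteq> multi_idx d"
  obtains K where "0 < K" "S \<subseteq> grid d K"
proof
  define K where "K = Suc (\<Sum>\<beta>\<in>S. \<Sum>j<d. \<beta> j)"
  show "0 < K"
    by (simp add: K_def)
  have "\<beta> j < K" if "\<beta> \<in> S" "j < d" for \<beta> j
  proof -
    have "\<beta> j \<le> (\<Sum>j<d. \<beta> j)"
      using that by (intro member_le_sum) auto
    also have "\<dots> \<le> (\<Sum>\<beta>\<in>S. \<Sum>j<d. \<beta> j)"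
      using that assms by (intro member_le_sum) auto
    finally show ?thesis
      by (simp add: K_def)
  qed
  then show "S \<subseteq> grid d K"
    using assms by (auto simp: grid_def multi_idx_def)
qed

definition character :: "nat \<Rightarrow> nat \<Rightarrow> (nat \<Rightarrow> nat) \<Rightarrow> (nat \<Rightarrow> nat) \<Rightarrow> complex" where
  "character d L k \<gamma> = (\<Prod>j<d. root_unity L ^ (k j * \<gamma> j))"

lemma character_add: "character d L k (\<alpha> + \<gamma>) = character d L k \<alpha> * character d L k \<gamma>"
  by (simp add: character_def distrib_left power_add prod.distrib)

lemma character_orthogonal:
  assumes "\<gamma> \<in> grid d L" "\<gamma>' \<in> grid d L"
  shows "(\<Sum>k\<in>{..<d} \<rightarrow>\<^sub>E {..<L}. character d L k \<gamma> * cnj (character d L k \<gamma>')) =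
    (if \<gamma> = \<gamma>' then of_nat (L ^ d) else 0)"
proof -
  have "(\<Sum>k\<in>{..<d} \<rightarrow>\<^sub>E {..<L}. character d L k \<gamma> * cnj (character d L k \<gamma>')) =
      (\<Sum>k\<in>{..<d} \<rightarrow>\<^sub>E {..<L}. \<Prod>j<d. (root_unity L ^ \<gamma> j * cnj (root_unity L ^ \<gamma>' j)) ^ k j)"
    unfolding character_def cnj_prod prod.distrib[symmetric]
    by (intro sum.cong prod.cong refl) (simp add: power_mult_distrib mult.commute flip: power_mult)
  also have "\<dots> = (\<Prod>j<d. \<Sum>t<L. (root_unity L ^ \<gamma> j * cnj (root_unity L ^ \<gamma>' j)) ^ t)"
    by (rule prod_sum_PiE[symmetric]) auto
  also have "\<dots> = (\<Prod>j<d. if \<gamma> j = \<gamma>' j then of_nat L else 0)"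
    using assms by (intro prod.cong refl sum_root_unity_powers) (auto simp: grid_def)
  also have "\<dots> = (if \<gamma> = \<gamma>' then of_nat (L ^ d) else 0)"
  proof (cases "\<gamma> = \<gamma>'")
    case False
    then obtain j where "\<gamma> j \<noteq> \<gamma>' j"
      by auto
    moreover from this have "j < d"
      using assms by (cases "j < d") (auto simp: grid_def)
    ultimately show ?thesis
      using False by (intro trans[OF prod_zero]) auto
  qed simp
  finally show ?thesis .
qed

definition torus_point :: "nat \<Rightarrow> nat \<Rightarrow> (nat \<Rightarrow> nat) \<Rightarrow> nat \<Rightarrow> complex" where
  "torus_point d L k = (\<lambda>j. if j < d then root_unity L ^ k j else 0)"

lemma poly_eval_torus_point:
  "poly_eval d c (torus_point d L k) = (\<Sum>\<alpha>\<in>{\<alpha>. c \<alpha> \<noteq> 0}. c \<alpha> * character d L k \<alpha>)"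
  unfolding poly_eval_def torus_point_def character_def
  by (intro sum.cong refl arg_cong2[where f = "(*)"] prod.cong) (auto simp: power_mult)

context complex_semi_inner
begin

definition dft :: "nat \<Rightarrow> nat \<Rightarrow> ((nat \<Rightarrow> nat) \<Rightarrow> 'h) \<Rightarrow> (nat \<Rightarrow> nat) \<Rightarrow> 'h" where
  "dft d L f k = (\<Sum>\<gamma>\<in>grid d L. sm (character d L k \<gamma>) (f \<gamma>))"

lemma parseval:
  "(\<Sum>k\<in>{..<d} \<rightarrow>\<^sub>E {..<L}. (hnorm ip (dft d L f k))\<^sup>2) = real (L ^ d) * (\<Sum>\<gamma>\<in>grid d L. (hnorm ip (f \<gamma>))\<^sup>2)"
proof -
  let ?K = "{..<d} \<rightarrow>\<^sub>E {..<L}" and ?G = "grid d L"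
  have "(\<Sum>k\<in>?K. ip (dft d L f k) (dft d L f k)) =
      (\<Sum>k\<in>?K. \<Sum>\<gamma>'\<in>?G. \<Sum>\<gamma>\<in>?G. character d L k \<gamma> * cnj (character d L k \<gamma>') * ip (f \<gamma>) (f \<gamma>'))"
    unfolding dft_def ip_sum_left ip_sum_right ip_sm_left ip_sm_right by (simp add: sum_distrib_left mult_ac)
  also have "\<dots> = (\<Sum>\<gamma>'\<in>?G. \<Sum>\<gamma>\<in>?G. \<Sum>k\<in>?K. character d L k \<gamma> * cnj (character d L k \<gamma>') * ip (f \<gamma>) (f \<gamma>'))"
    by (rule trans[OF sum.swap sum.cong[OF refl sum.swap]])
  also have "\<dots> = (\<Sum>\<gamma>'\<in>?G. \<Sum>\<gamma>\<in>?G. (if \<gamma> = \<gamma>' then of_nat (L ^ d) * ip (f \<gamma>) (f \<gamma>') else 0))"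
    by (intro sum.cong refl) (simp add: character_orthogonal flip: sum_distrib_right)
  also have "\<dots> = of_nat (L ^ d) * (\<Sum>\<gamma>\<in>?G. ip (f \<gamma>) (f \<gamma>))"
    unfolding sum_distrib_left by (intro sum.cong refl) (simp add: finite_grid)
  finally have "(\<Sum>k\<in>?K. ip (dft d L f k) (dft d L f k)) = of_nat (L ^ d) * (\<Sum>\<gamma>\<in>?G. ip (f \<gamma>) (f \<gamma>))" .
  then show ?thesis
    by (simp add: hnorm_power2 flip: Re_sum)
qed

lemma dft_sum: "dft d L (\<lambda>\<beta>. \<Sum>\<alpha>\<in>S. f \<alpha> \<beta>) k = (\<Sum>\<alpha>\<in>S. dft d L (f \<alpha>) k)"
  unfolding dft_def sm_sum_right by (rule sum.swap)

lemma dft_sm: "dft d L (\<lambda>\<beta>. sm a (f \<beta>)) k = sm a (dft d L f k)"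
  unfolding dft_def sm_sum_right sm_assoc by (simp add: mult.commute)

text \<open>Since \<open>2 K \<le> L\<close>, translating a function supported in \<open>grid d K\<close> by \<open>\<alpha> \<in> grid d K\<close>
  does not wrap around modulo \<open>L\<close>.\<close>

lemma dft_translate:
  assumes "\<alpha> \<in> grid d K" "\<forall>\<gamma>. \<gamma> \<notin> grid d K \<longrightarrow> y \<gamma> = 0" "2 * K \<le> L"
  shows "dft d L (\<lambda>\<beta>. if \<alpha> \<le> \<beta> then y (\<beta> - \<alpha>) else 0) k = sm (character d L k \<alpha>) (dft d L y k)"
proof -
  have "a + b < L" if "a < K" "b < K" for a b
    using that assms(3) by linarith
  then have sub: "(+) \<alpha> ` grid d K \<subseteq> grid d L"
    using assms(1) by (auto simp: grid_def)
  have "dft d L (\<lambda>\<beta>. if \<alpha> \<le> \<beta> then y (\<beta> - \<alpha>) else 0) k =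
      (\<Sum>\<beta>\<in>(+) \<alpha> ` grid d K. sm (character d L k \<beta>) (y (\<beta> - \<alpha>)))"
    unfolding dft_def
  proof (rule sum.mono_neutral_cong_right[OF finite_grid sub])
    have "\<beta> = \<alpha> + (\<beta> - \<alpha>)" if "\<alpha> \<le> \<beta>" for \<beta>
      using that by (auto simp: fun_eq_iff le_fun_def)
    then show "\<forall>\<beta>\<in>grid d L - (+) \<alpha> ` grid d K. sm (character d L k \<beta>) (if \<alpha> \<le> \<beta> then y (\<beta> - \<alpha>) else 0) = 0"
      using assms(2) by (metis DiffD2 image_eqI sm_zero_right)
  qed (auto simp: le_fun_def)
  also have "\<dots> = (\<Sum>\<gamma>\<in>grid d K. sm (character d L k (\<alpha> + \<gamma>)) (y \<gamma>))"
    by (subst sum.reindex) (auto simp: inj_on_def fun_eq_iff)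
  also have "\<dots> = sm (character d L k \<alpha>) (\<Sum>\<gamma>\<in>grid d K. sm (character d L k \<gamma>) (y \<gamma>))"
    by (simp add: character_add sm_sum_right sm_assoc)
  also have "(\<Sum>\<gamma>\<in>grid d K. sm (character d L k \<gamma>) (y \<gamma>)) = dft d L y k"
    unfolding dft_def using assms(2,3)
    by (intro sum.mono_neutral_left[OF finite_grid grid_mono]) auto
  finally show ?thesis .
qed

lemma dft_poly_conv:
  assumes "{\<alpha>. c \<alpha> \<noteq> 0} \<subseteq> grid d K" "\<forall>\<gamma>. \<gamma> \<notin> grid d K \<longrightarrow> y \<gamma> = 0" "2 * K \<le> L"
  shows "dft d L (poly_conv c y) k = sm (poly_eval d c (torus_point d L k)) (dft d L y k)"
proof -
  have "poly_conv c y = (\<lambda>\<beta>. \<Sum>\<alpha>\<in>{\<alpha>. c \<alpha> \<noteq> 0}. sm (c \<alpha>) (if \<alpha> \<le> \<beta> then y (\<beta> - \<alpha>) else 0))"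
    by (auto simp: fun_eq_iff poly_conv_def intro!: sum.cong)
  then have "dft d L (poly_conv c y) k = (\<Sum>\<alpha>\<in>{\<alpha>. c \<alpha> \<noteq> 0}. sm (c \<alpha>) (sm (character d L k \<alpha>) (dft d L y k)))"
    using assms by (auto simp: dft_sum dft_sm dft_translate intro!: sum.cong)
  then show ?thesis
    by (simp add: poly_eval_torus_point sm_assoc sm_sum_left)
qed

lemma sum_hnorm_poly_conv_le:
  assumes "{\<alpha>. c \<alpha> \<noteq> 0} \<subseteq> grid d K" "\<forall>\<gamma>. \<gamma> \<notin> grid d K \<longrightarrow> y \<gamma> = 0" "2 * K \<le> L" "0 < L"
    and torus: "\<And>k. k \<in> {..<d} \<rightarrow>\<^sub>E {..<L} \<Longrightarrow> cmod (poly_eval d c (torus_point d L k)) \<le> M"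
  shows "(\<Sum>\<beta>\<in>grid d L. (hnorm ip (poly_conv c y \<beta>))\<^sup>2) \<le> M\<^sup>2 * (\<Sum>\<gamma>\<in>grid d L. (hnorm ip (y \<gamma>))\<^sup>2)"
proof -
  let ?K = "{..<d} \<rightarrow>\<^sub>E {..<L}"
  have "real (L ^ d) * (\<Sum>\<beta>\<in>grid d L. (hnorm ip (poly_conv c y \<beta>))\<^sup>2) =
      (\<Sum>k\<in>?K. (cmod (poly_eval d c (torus_point d L k)))\<^sup>2 * (hnorm ip (dft d L y k))\<^sup>2)"
    unfolding parseval[symmetric] dft_poly_conv[OF assms(1-3)] hnorm_sm power_mult_distrib ..
  also have "\<dots> \<le> (\<Sum>k\<in>?K. M\<^sup>2 * (hnorm ip (dft d L y k))\<^sup>2)"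
    using torus by (intro sum_mono mult_right_mono power_mono) auto
  also have "\<dots> = real (L ^ d) * (M\<^sup>2 * (\<Sum>\<gamma>\<in>grid d L. (hnorm ip (y \<gamma>))\<^sup>2))"
    unfolding sum_distrib_left[symmetric] parseval by (simp only: mult_ac)
  finally show ?thesis
    using \<open>0 < L\<close> by simp
qed

lemma poly_conv_restrict_grid:
  "\<beta> \<in> grid d K \<Longrightarrow> poly_conv c (\<lambda>\<gamma>. if \<gamma> \<in> grid d K then y \<gamma> else 0) \<beta> = poly_conv c y \<beta>"
  unfolding poly_conv_def by (intro sum.cong) (auto simp: grid_def le_less_trans[OF diff_le_self])

lemma sum_hnorm_poly_conv_grid_le:
  assumes "{\<alpha>. c \<alpha> \<noteq> 0} \<subseteq> grid d K" "0 < K"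
    and "\<And>k. k \<in> {..<d} \<rightarrow>\<^sub>E {..<2 * K} \<Longrightarrow> cmod (poly_eval d c (torus_point d (2 * K) k)) \<le> M"
  shows "(\<Sum>\<beta>\<in>grid d K. (hnorm ip (poly_conv c y \<beta>))\<^sup>2) \<le> M\<^sup>2 * (\<Sum>\<gamma>\<in>grid d K. (hnorm ip (y \<gamma>))\<^sup>2)"
proof -
  define y' where "y' = (\<lambda>\<gamma>. if \<gamma> \<in> grid d K then y \<gamma> else 0)"
  have "(\<Sum>\<beta>\<in>grid d K. (hnorm ip (poly_conv c y \<beta>))\<^sup>2) = (\<Sum>\<beta>\<in>grid d K. (hnorm ip (poly_conv c y' \<beta>))\<^sup>2)"
    by (simp add: y'_def poly_conv_restrict_grid)
  also have "\<dots> \<le> (\<Sum>\<beta>\<in>grid d (2 * K). (hnorm ip (poly_conv c y' \<beta>))\<^sup>2)"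
    by (intro sum_mono2 finite_grid grid_mono) auto
  also have "\<dots> \<le> M\<^sup>2 * (\<Sum>\<gamma>\<in>grid d (2 * K). (hnorm ip (y' \<gamma>))\<^sup>2)"
    using assms by (intro sum_hnorm_poly_conv_le) (auto simp: y'_def)
  also have "(\<Sum>\<gamma>\<in>grid d (2 * K). (hnorm ip (y' \<gamma>))\<^sup>2) = (\<Sum>\<gamma>\<in>grid d K. (hnorm ip (y \<gamma>))\<^sup>2)"
    by (rule sum.mono_neutral_cong_right[OF finite_grid grid_mono]) (auto simp: y'_def)
  finally show ?thesis .
qed

lemma l2norm_poly_conv_le:
  assumes "is_poly d c" "y \<in> l2H d ip" "0 \<le> M"
    and "\<And>L k. 0 < L \<Longrightarrow> k \<in> {..<d} \<rightarrow>\<^sub>E {..<L} \<Longrightarrow> cmod (poly_eval d c (torus_point d L k)) \<le> M"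
  shows "l2norm d ip (poly_conv c y) \<le> M * l2norm d ip y"
proof -
  define N where "N = (\<Sum>\<^sub>\<infinity>\<gamma>\<in>multi_idx d. (hnorm ip (y \<gamma>))\<^sup>2)"
  have y: "(\<lambda>\<gamma>. (hnorm ip (y \<gamma>))\<^sup>2) summable_on multi_idx d"
    using assms(2) by (simp add: l2H_def)
  have finite_sums: "(\<Sum>\<beta>\<in>F. (hnorm ip (poly_conv c y \<beta>))\<^sup>2) \<le> M\<^sup>2 * N"
    if "finite F" "F \<subseteq> multi_idx d" for F
  proof -
    have "finite (F \<union> {\<alpha>. c \<alpha> \<noteq> 0})" "F \<union> {\<alpha>. c \<alpha> \<noteq> 0} \<subseteq> multi_idx d"
      using that assms(1) by (auto simp: is_poly_def)
    then obtain K where K: "0 < K" "F \<union> {\<alpha>. c \<alpha> \<noteq> 0} \<subseteq> grid d K"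
      by (rule finite_subset_grid)
    have "(\<Sum>\<beta>\<in>F. (hnorm ip (poly_conv c y \<beta>))\<^sup>2) \<le> (\<Sum>\<beta>\<in>grid d K. (hnorm ip (poly_conv c y \<beta>))\<^sup>2)"
      using K by (intro sum_mono2 finite_grid) auto
    also have "\<dots> \<le> M\<^sup>2 * (\<Sum>\<gamma>\<in>grid d K. (hnorm ip (y \<gamma>))\<^sup>2)"
      using K assms(4) by (intro sum_hnorm_poly_conv_grid_le) auto
    also have "\<dots> \<le> M\<^sup>2 * N"
      unfolding N_def by (intro mult_left_mono finite_sum_le_infsum[OF y] finite_grid grid_subset_multi_idx) auto
    finally show ?thesis .
  qed
  have "(\<lambda>\<beta>. (hnorm ip (poly_conv c y \<beta>))\<^sup>2) summable_on multi_idx d"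
    using finite_sums by (intro nonneg_bdd_above_summable_on bdd_aboveI) auto
  then have "(\<Sum>\<^sub>\<infinity>\<beta>\<in>multi_idx d. (hnorm ip (poly_conv c y \<beta>))\<^sup>2) \<le> M\<^sup>2 * N"
    using finite_sums by (rule infsum_le_finite_sums)
  then have "l2norm d ip (poly_conv c y) \<le> sqrt (M\<^sup>2 * N)"
    by (simp add: l2norm_def)
  also have "\<dots> = M * l2norm d ip y"
    using assms(3) by (simp add: l2norm_def N_def real_sqrt_mult)
  finally show ?thesis .
qed

end

section \<open>From the torus to the polydisc\<close>

lemma norm_poly_eval_polydisc_le:
  assumes "z \<in> polydisc d"
  shows "cmod (poly_eval d c z) \<le> (\<Sum>\<alpha>\<in>{\<alpha>. c \<alpha> \<noteq> 0}. cmod (c \<alpha>))"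
proof -
  have "cmod (\<Prod>j<d. z j ^ \<alpha> j) \<le> 1" for \<alpha>
    using assms unfolding polydisc_def prod_norm[symmetric] norm_power
    by (intro prod_le_1) (auto intro!: power_le_one simp: less_imp_le)
  then have "cmod (c \<alpha> * (\<Prod>j<d. z j ^ \<alpha> j)) \<le> cmod (c \<alpha>)" for \<alpha>
    by (simp add: norm_mult mult_left_le)
  then show ?thesis
    unfolding poly_eval_def by (intro order.trans[OF norm_sum] sum_mono)
qed

lemma bdd_above_poly_eval_polydisc: "bdd_above ((\<lambda>z. cmod (poly_eval d c z)) ` polydisc d)"
  by (rule bdd_aboveI2) (rule norm_poly_eval_polydisc_le)

lemma Sup_poly_eval_polydisc_nonneg: "0 \<le> (SUP z\<in>polydisc d. cmod (poly_eval d c z))"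
  by (rule cSUP_upper2[OF bdd_above_poly_eval_polydisc, of "\<lambda>_. 0"]) (auto simp: polydisc_def)

lemma poly_eval_torus_le_Sup:
  assumes "\<And>j. j < d \<Longrightarrow> cmod (z j) = 1" "\<And>j. d \<le> j \<Longrightarrow> z j = 0"
  shows "cmod (poly_eval d c z) \<le> (SUP w\<in>polydisc d. cmod (poly_eval d c w))"
proof -
  define r where "r n = 1 - inverse (real (Suc n))" for n
  have r: "r \<longlonglongrightarrow> 1"
    unfolding r_def using tendsto_diff[OF tendsto_const LIMSEQ_inverse_real_of_nat] by simp
  have "(\<lambda>n. poly_eval d c (\<lambda>j. of_real (r n) * z j)) \<longlonglongrightarrow> poly_eval d c (\<lambda>j. of_real 1 * z j)"
    unfolding poly_eval_def by (intro tendsto_intros r)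
  then have lim: "(\<lambda>n. poly_eval d c (\<lambda>j. of_real (r n) * z j)) \<longlonglongrightarrow> poly_eval d c z"
    by simp
  have "0 \<le> r n" "r n < 1" for n
    unfolding r_def by (auto simp: field_simps)
  then have disc: "(\<lambda>j. of_real (r n) * z j) \<in> polydisc d" for n
    using assms by (auto simp: polydisc_def norm_mult)
  show ?thesis
    using disc by (intro LIMSEQ_le_const2[OF tendsto_norm[OF lim]] exI[of _ 0] allI impI
        cSUP_upper bdd_above_poly_eval_polydisc)
qed

theorem proposition3p3:
  fixes d :: nat
    and sm :: "complex \<Rightarrow> 'h::ab_group_add \<Rightarrow> 'h"
    and ip :: "'h \<Rightarrow> 'h \<Rightarrow> complex"
    and A :: "nat \<Rightarrow> (nat \<Rightarrow> nat) \<Rightarrow> 'h \<Rightarrow> 'h"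
    and c :: "(nat \<Rightarrow> nat) \<Rightarrow> complex"
  assumes "0 < d"
    and "complex_hilbert_space sm ip"
    and "\<And>j \<alpha>. j < d \<Longrightarrow> \<alpha> \<in> multi_idx d \<Longrightarrow> unitary_op sm ip (A j \<alpha>)"
    and "commuting_weights d ip A"
    and "is_poly d c"
  shows "\<forall>x\<in>l2H d ip.
           l2norm d ip (poly_op d sm c (multishift d A) x)
             \<le> (SUP z\<in>polydisc d. cmod (poly_eval d c z)) * l2norm d ip x"
proof
  interpret complex_semi_inner sm ip
    using assms(2) by (rule complex_hilbert_space_semi_inner)
  interpret unitary_multishift d sm ip A
    using assms(3,4) unfolding commuting_weights_def by unfold_locales blast+
  let ?M = "SUP z\<in>polydisc d. cmod (poly_eval d c z)"
  have torus: "cmod (poly_eval d c (torus_point d L k)) \<le> ?M" for L k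
    by (rule poly_eval_torus_le_Sup) (simp_all add: torus_point_def norm_power)
  fix x assume "x \<in> l2H d ip"
  then obtain y where y: "y \<in> l2H d ip" "l2norm d ip y = l2norm d ip x"
    and eq: "l2norm d ip (poly_op d sm c (multishift d A) x) = l2norm d ip (poly_op d sm c (unweighted_shift d) y)"
    by (rule l2norm_poly_op_unweighted_shift)
  have "y \<in> multi_supported d"
    using y(1) by (simp add: l2H_def multi_supported_def)
  then show "l2norm d ip (poly_op d sm c (multishift d A) x) \<le> ?M * l2norm d ip x"
    using l2norm_poly_conv_le[OF assms(5) y(1) Sup_poly_eval_polydisc_nonneg torus] eq y(2)
    by (simp add: poly_op_unweighted_shift[OF _ assms(5)])
qed

end
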